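(* Let $n,t\ge1$ and $b\ge1$. Then \[ N_{2,b}^+(n,t)=2^{b}\,I_{2,b}(n,t-1)=2^{t(b-1)+1}\sum_{i=0}^{t-1}\binom{n+t-1}{i}. \]
   Context: $\Sigma_2=\{0,1\}$. A $b$-burst-insertion at position $i\in[1,n+1]$ transforms $x_1\cdots x_n$ into $x_1\cdots x_{i-1}y_1\cdots y_b x_i\cdots x_n$ for arbitrary $y_1\cdots y_b\in\Sigma_2^b$. $\mathcal{I}_{t,b}(\boldsymbol{x})$ is the set of all length-$(n+tb)$ sequences obtainable from $\boldsymbol{x}$ by $t$ successive $b$-burst-insertions ($\mathcal{I}_{0,b}(\boldsymbol{x})=\{\boldsymbol{x}\}$). $I_{2,b}(n,t)=\max\{|\mathcal{I}_{t,b}(\boldsymbol{x})|:\boldsymbol{x}\in\Sigma_2^n\}$ and $N_{2,b}^+(n,t)=\max\{|\mathcal{I}_{t,b}(\boldsymbol{x})\cap\mathcal{I}_{t,b}(\boldsymbol{y})|:\boldsymbol{x}\ne\boldsymbol{y}\in\Sigma_2^n\}$. Convention: $\binom{m}{i}=0$ if $m<i$. *)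

theory Defs
  imports Main
begin

definition burst_ins :: "nat \<Rightarrow> bool list \<Rightarrow> bool list set" where
  "burst_ins b x = {take (i - 1) x @ y @ drop (i - 1) x | i y.
                      1 \<le> i \<and> i \<le> length x + 1 \<and> length y = b}"

fun I_set :: "nat \<Rightarrow> nat \<Rightarrow> bool list \<Rightarrow> bool list set" where
  "I_set 0 b x = {x}"
| "I_set (Suc t) b x = (\<Union>z \<in> I_set t b x. burst_ins b z)"

definition I2 :: "nat \<Rightarrow> nat \<Rightarrow> nat \<Rightarrow> nat" where
  "I2 b n t = Max {card (I_set t b x) | x. length x = n}"

definition N2plus :: "nat \<Rightarrow> nat \<Rightarrow> nat \<Rightarrow> nat" where
  "N2plus b n t = Max {card (I_set t b x \<inter> I_set t b y) | x y.
                         length x = n \<and> length y = n \<and> x \<noteq> y}"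

end

theory Submission
  imports Defs
begin

text \<open>A word z lies in \<open>I_set t b x\<close> iff x can be embedded in z so that each gap (before a
symbol of x, or at the end) has length divisible by b. Reading z from the left with the leftmost
such embedding, either the first symbol of z is the first symbol a of x, or it differs from a and
starts a burst whose other b - 1 symbols are free. Hence \<open>|I_set t b x|\<close> depends only on
\<open>n = |x|\<close> and satisfies \<open>I(n+1,t+1) = I(n,t+1) + 2^(b-1) I(n+1,t)\<close>, which is solved by
\<open>2^(t(b-1)) \<Sum>i\<le>t. (n+t choose i)\<close>. For distinct x, y of equal length, the common prefix
is peeled off with the same recursion; at the first position where x = a x' and y = c y' differ,
every common supersequence starts with a followed by a (b-1)-padded element of
\<open>I_set (t-1) b y\<close>, or symmetrically with c. This bounds the intersection by
\<open>2^b I(n, t-1)\<close>, with equality for a w and c w.\<close>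

fun gapped_supseq :: "nat \<Rightarrow> nat \<Rightarrow> 'a list \<Rightarrow> 'a list \<Rightarrow> bool" where
  "gapped_supseq b t [] z \<longleftrightarrow> length z = t * b"
| "gapped_supseq b t (a # x) z \<longleftrightarrow>
     (\<exists>g z' k. z = g @ a # z' \<and> length g = k * b \<and> k \<le> t \<and> gapped_supseq b (t - k) x z')"

declare gapped_supseq.simps(2) [simp del]

lemma gapped_supseq_ConsI:
  assumes "z = g @ a # z'" and "length g = k * b" and "gapped_supseq b s x z'"
  shows "gapped_supseq b (k + s) (a # x) z"
  unfolding gapped_supseq.simps(2) using assms by (intro exI[of _ g] exI[of _ z'] exI[of _ k]) simp

lemma gapped_supseq_ConsE:
  assumes "gapped_supseq b t (a # x) z"
  obtains g z' k s where "z = g @ a # z'" "length g = k * b" "t = k + s" "gapped_supseq b s x z'"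
  using assms unfolding gapped_supseq.simps(2) by (metis le_add_diff_inverse)

lemma gapped_supseq_length: "gapped_supseq b t x z \<Longrightarrow> length z = length x + t * b"
proof (induction x arbitrary: t z)
  case Nil
  then show ?case by simp
next
  case (Cons a x)
  from Cons.prems obtain g z' k s where "z = g @ a # z'" "length g = k * b" "t = k + s"
    and "gapped_supseq b s x z'" by (rule gapped_supseq_ConsE)
  then show ?case using Cons.IH by (simp add: add_mult_distrib)
qed

lemma gapped_supseq_prepend_blocks:
  assumes "gapped_supseq b s x w" and "length h = k * b"
  shows "gapped_supseq b (k + s) x (h @ w)"
proof (cases x)
  case Nil
  then show ?thesis using assms by (simp add: add_mult_distrib)
next
  case (Cons a x')
  with assms(1) obtain g z' k' s' where "w = g @ a # z'" "length g = k' * b" "s = k' + s'"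
    and "gapped_supseq b s' x' z'" by (blast elim: gapped_supseq_ConsE)
  then have "gapped_supseq b ((k + k') + s') (a # x') ((h @ g) @ a # z')"
    using assms(2) by (intro gapped_supseq_ConsI) (auto simp: add_mult_distrib)
  then show ?thesis using Cons \<open>w = g @ a # z'\<close> \<open>s = k' + s'\<close> by (simp add: add.assoc)
qed

lemma gapped_supseq_0_iff: "gapped_supseq b 0 x z \<longleftrightarrow> z = x"
  by (induction x arbitrary: z) (auto simp: gapped_supseq.simps(2))

lemma burst_ins_eq: "burst_ins b z = {u @ y @ v | u y v. z = u @ v \<and> length y = b}"
proof (intro set_eqI iffI)
  fix w
  assume "w \<in> burst_ins b z"
  then obtain i y where "w = take (i - 1) z @ y @ drop (i - 1) z" "length y = b"
    unfolding burst_ins_def by blast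
  then show "w \<in> {u @ y @ v | u y v. z = u @ v \<and> length y = b}"
    by (metis (mono_tags, lifting) append_take_drop_id mem_Collect_eq)
next
  fix w
  assume "w \<in> {u @ y @ v | u y v. z = u @ v \<and> length y = b}"
  then obtain u y v where "w = u @ y @ v" "z = u @ v" "length y = b" by blast
  then show "w \<in> burst_ins b z" unfolding burst_ins_def
    by (intro CollectI exI[of _ "length u + 1"] exI[of _ y]) simp
qed

lemma gapped_supseq_insert_burst:
  "gapped_supseq b t x (u @ v) \<Longrightarrow> length y = b \<Longrightarrow> gapped_supseq b (Suc t) x (u @ y @ v)"
proof (induction x arbitrary: t u v)
  case Nil
  then show ?case by simp
next
  case (Cons a x)
  from Cons.prems(1) obtain g z' k s where g: "u @ v = g @ a # z'" "length g = k * b" "t = k + s"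
    and z': "gapped_supseq b s x z'" by (rule gapped_supseq_ConsE)
  from g(1) obtain us where "u = g @ us \<and> us @ v = a # z' \<or> u @ us = g \<and> v = us @ a # z'"
    unfolding append_eq_append_conv2 by blast
  then consider (in_gap) "u @ us = g" "v = us @ a # z'"
    | (past_a) us' where "u = g @ a # us'" "z' = us' @ v"
    by (cases us) auto
  then show ?case
  proof cases
    case in_gap
    have "gapped_supseq b (Suc k + s) (a # x) ((u @ y @ us) @ a # z')"
      by (rule gapped_supseq_ConsI[OF refl _ z']) (use in_gap g Cons.prems(2) in auto)
    then show ?thesis using in_gap g by simp
  next
    case past_a
    have "gapped_supseq b (Suc s) x (us' @ y @ v)"
      using Cons.IH z' Cons.prems(2) past_a by blast
    then have "gapped_supseq b (k + Suc s) (a # x) (g @ a # us' @ y @ v)"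
      by (rule gapped_supseq_ConsI[OF refl g(2)])
    then show ?thesis using past_a g by simp
  qed
qed

lemma gapped_supseq_delete_burst:
  "gapped_supseq b (Suc t) x w \<Longrightarrow>
     \<exists>u y v. w = u @ y @ v \<and> length y = b \<and> gapped_supseq b t x (u @ v)"
proof (induction x arbitrary: t w)
  case Nil
  then show ?case by (intro exI[of _ "[]"] exI[of _ "take b w"] exI[of _ "drop b w"]) simp
next
  case (Cons a x)
  from Cons.prems obtain g z' k s where g: "w = g @ a # z'" "length g = k * b" "Suc t = k + s"
    and z': "gapped_supseq b s x z'" by (rule gapped_supseq_ConsE)
  show ?case
  proof (cases k)
    case 0
    with z' g(3) have "gapped_supseq b (Suc t) x z'" by simp
    with Cons.IH obtain u y v where "z' = u @ y @ v" "length y = b"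
      and "gapped_supseq b t x (u @ v)" by blast
    moreover have "gapped_supseq b (0 + t) (a # x) (a # u @ v)"
      using calculation(3) by (intro gapped_supseq_ConsI[of _ "[]"]) simp_all
    ultimately show ?thesis using g 0
      by (intro exI[of _ "a # u"] exI[of _ y] exI[of _ v]) simp
  next
    case (Suc k')
    have "length (drop b g) = k' * b" using g(2) Suc by simp
    then have "gapped_supseq b (k' + s) (a # x) (drop b g @ a # z')"
      by (rule gapped_supseq_ConsI[OF refl _ z'])
    then show ?thesis using g Suc
      by (intro exI[of _ "[]"] exI[of _ "take b g"] exI[of _ "drop b g @ a # z'"]) simp
  qed
qed

lemma I_set_eq_gapped_supseq: "I_set t b x = {z. gapped_supseq b t x z}"
proof (induction t)
  case 0
  then show ?case by (simp add: gapped_supseq_0_iff)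
next
  case (Suc t)
  show ?case
  proof (intro set_eqI iffI)
    fix w
    assume "w \<in> I_set (Suc t) b x"
    then obtain u y v where "gapped_supseq b t x (u @ v)" "w = u @ y @ v" "length y = b"
      by (auto simp: Suc burst_ins_eq)
    then show "w \<in> {z. gapped_supseq b (Suc t) x z}"
      using gapped_supseq_insert_burst by blast
  next
    fix w
    assume "w \<in> {z. gapped_supseq b (Suc t) x z}"
    then obtain u y v where "w = u @ y @ v" "length y = b" "gapped_supseq b t x (u @ v)"
      using gapped_supseq_delete_burst by blast
    then show "w \<in> I_set (Suc t) b x" by (auto simp: Suc burst_ins_eq)
  qed
qed

declare I_set.simps(2) [simp del]

lemma gapped_supseq_Cons_Cons_iff:
  assumes "b \<ge> 1"
  shows "gapped_supseq b t (a # x) (d # z) \<longleftrightarrow>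
     d = a \<and> gapped_supseq b t x z \<or>
     d \<noteq> a \<and> 1 \<le> t \<and> b - 1 \<le> length z \<and> gapped_supseq b (t - 1) (a # x) (drop (b - 1) z)"
    (is "?lhs \<longleftrightarrow> ?match \<or> ?burst")
proof
  assume ?lhs
  then obtain g z' k s where g: "d # z = g @ a # z'" "length g = k * b" "t = k + s"
    and z': "gapped_supseq b s x z'" by (rule gapped_supseq_ConsE)
  show "?match \<or> ?burst"
  proof (cases g)
    case Nil
    then show ?thesis using g z' assms by simp
  next
    case (Cons d' g')
    then have z: "d = d'" "z = g' @ a # z'" and k: "k \<ge> 1" "length g' = k * b - 1"
      using g by (auto simp: Suc_le_eq intro: gr0I)
    show ?thesis
    proof (cases "d = a")
      case True
      have "gapped_supseq b (k + s) x ((g' @ [a]) @ z')"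
        by (rule gapped_supseq_prepend_blocks[OF z']) (use k assms in \<open>simp add: Suc_le_eq\<close>)
      then show ?thesis using True z g by simp
    next
      case False
      have "b \<le> k * b" using k by simp
      then have "drop (b - 1) z = drop (b - 1) g' @ a # z'"
        and "length (drop (b - 1) g') = (k - 1) * b"
        using z k assms by (simp_all add: diff_mult_distrib)
      then have "gapped_supseq b ((k - 1) + s) (a # x) (drop (b - 1) z)"
        by (intro gapped_supseq_ConsI[OF _ _ z'])
      moreover have "b - 1 \<le> length g'" using k(2) \<open>b \<le> k * b\<close> by linarith
      then have "b - 1 \<le> length z" using z by simp
      ultimately show ?thesis using False k g by simp
    qed
  qed
next
  assume "?match \<or> ?burst"
  then show ?lhs
  proof
    assume ?match
    then have "gapped_supseq b (0 + t) (a # x) ([] @ a # z)"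
      by (intro gapped_supseq_ConsI) auto
    then show ?lhs using \<open>?match\<close> by simp
  next
    assume ?burst
    then have "gapped_supseq b (t - 1) (a # x) (drop (b - 1) z)" by blast
    then obtain g z' k s where g: "drop (b - 1) z = g @ a # z'" "length g = k * b" "t - 1 = k + s"
      and z': "gapped_supseq b s x z'" by (rule gapped_supseq_ConsE)
    have "d # z = (d # take (b - 1) z @ g) @ a # z'"
      using g(1) by (metis append_Cons append_assoc append_take_drop_id)
    moreover have "length (d # take (b - 1) z @ g) = (k + 1) * b"
      using g(2) \<open>?burst\<close> assms by simp
    ultimately have "gapped_supseq b ((k + 1) + s) (a # x) (d # z)"
      by (rule gapped_supseq_ConsI[OF _ _ z'])
    moreover have "(k + 1) + s = t" using g(3) \<open>?burst\<close> by linarith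
    ultimately show ?lhs by simp
  qed
qed

lemma card_bool_lists_length: "card {z :: bool list. length z = n} = 2 ^ n"
  using card_lists_length_eq[of "UNIV :: bool set" n] by simp

lemma finite_bool_lists_length: "finite {z :: bool list. length z = n}"
  using finite_lists_length_eq[of "UNIV :: bool set" n] by simp

definition pad_front :: "nat \<Rightarrow> 'a list set \<Rightarrow> 'a list set" where
  "pad_front m A = {u @ v | u v. length u = m \<and> v \<in> A}"

lemma mem_pad_front_iff: "z \<in> pad_front m A \<longleftrightarrow> m \<le> length z \<and> drop m z \<in> A"
proof
  assume "m \<le> length z \<and> drop m z \<in> A"
  then show "z \<in> pad_front m A" unfolding pad_front_def
    by (intro CollectI exI[of _ "take m z"] exI[of _ "drop m z"]) simp
qed (auto simp: pad_front_def)

lemma pad_front_Int: "pad_front m (A \<inter> B) = pad_front m A \<inter> pad_front m B"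
  by (auto simp: mem_pad_front_iff)

lemma pad_front_eq_image: "pad_front m A = (\<lambda>(u, v). u @ v) ` ({u. length u = m} \<times> A)"
  unfolding pad_front_def by auto

lemma finite_card_pad_front:
  assumes "finite (A :: bool list set)"
  shows "finite (pad_front m A)" and "card (pad_front m A) = 2 ^ m * card A"
proof -
  have "inj_on (\<lambda>(u, v). u @ v) ({u :: bool list. length u = m} \<times> A)"
    by (auto simp: inj_on_def)
  then have "card (pad_front m A) = card ({u :: bool list. length u = m} \<times> A)"
    unfolding pad_front_eq_image by (rule card_image)
  then show "card (pad_front m A) = 2 ^ m * card A"
    by (simp add: card_cartesian_product card_bool_lists_length)
  show "finite (pad_front m A)"
    unfolding pad_front_eq_image using assms finite_bool_lists_length by simp
qed

lemma finite_I_set: "finite (I_set t b x)"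
proof (rule finite_subset)
  show "I_set t b x \<subseteq> {z. length z = length x + t * b}"
    using gapped_supseq_length by (auto simp: I_set_eq_gapped_supseq)
qed (rule finite_bool_lists_length)

lemma I_set_Suc_Cons:
  assumes "b \<ge> 1"
  shows "I_set (Suc s) b (a # x) =
     Cons a ` I_set (Suc s) b x \<union> Cons (\<not> a) ` pad_front (b - 1) (I_set s b (a # x))"
proof (rule set_eqI)
  fix z
  show "z \<in> I_set (Suc s) b (a # x) \<longleftrightarrow>
     z \<in> Cons a ` I_set (Suc s) b x \<union> Cons (\<not> a) ` pad_front (b - 1) (I_set s b (a # x))"
    by (cases z) (auto simp: I_set_eq_gapped_supseq gapped_supseq_Cons_Cons_iff[OF assms]
        mem_pad_front_iff elim: gapped_supseq_ConsE)
qed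

lemma sum_choose_Suc_atMost_Suc:
  "(\<Sum>i\<le>Suc s. Suc m choose i) = (\<Sum>i\<le>Suc s. m choose i) + (\<Sum>i\<le>s. m choose i)"
proof -
  have "(\<Sum>i\<le>Suc s. Suc m choose i) = 1 + (\<Sum>i\<le>s. m choose Suc i) + (\<Sum>i\<le>s. m choose i)"
    by (simp only: sum.atMost_Suc_shift binomial_n_0 binomial_Suc_Suc sum.distrib add.assoc)
  also have "1 + (\<Sum>i\<le>s. m choose Suc i) = (\<Sum>i\<le>Suc s. m choose i)"
    by (simp only: sum.atMost_Suc_shift binomial_n_0)
  finally show ?thesis .
qed

definition ins_ball_size :: "nat \<Rightarrow> nat \<Rightarrow> nat \<Rightarrow> nat" where
  "ins_ball_size b n t = 2 ^ (t * (b - 1)) * (\<Sum>i\<le>t. (n + t) choose i)"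

lemma ins_ball_size_0_right [simp]: "ins_ball_size b n 0 = 1"
  by (simp add: ins_ball_size_def)

lemma ins_ball_size_0_left:
  assumes "b \<ge> 1"
  shows "ins_ball_size b 0 t = 2 ^ (t * b)"
proof -
  have "ins_ball_size b 0 t = 2 ^ (t * (b - 1) + t)"
    by (simp add: ins_ball_size_def choose_row_sum power_add)
  also have "t * (b - 1) + t = t * b" using assms by (simp add: diff_mult_distrib2)
  finally show ?thesis .
qed

lemma ins_ball_size_Suc_Suc:
  "ins_ball_size b (Suc n) (Suc s) =
     ins_ball_size b n (Suc s) + 2 ^ (b - 1) * ins_ball_size b (Suc n) s"
proof -
  have "Suc n + Suc s = Suc (n + Suc s)" and "Suc n + s = n + Suc s" by simp_all
  moreover have "(2::nat) ^ (Suc s * (b - 1)) = 2 ^ (b - 1) * 2 ^ (s * (b - 1))"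
    by (simp add: power_add)
  ultimately show ?thesis unfolding ins_ball_size_def
    by (simp only: sum_choose_Suc_atMost_Suc distrib_left mult.assoc)
qed

lemma card_I_set:
  assumes "b \<ge> 1"
  shows "card (I_set t b x) = ins_ball_size b (length x) t"
proof (induction x arbitrary: t)
  case Nil
  have "I_set t b [] = {z. length z = t * b}" by (simp add: I_set_eq_gapped_supseq)
  then show ?case by (simp add: card_bool_lists_length ins_ball_size_0_left[OF assms])
next
  case (Cons a x)
  show ?case
  proof (induction t)
    case 0
    then show ?case by simp
  next
    case (Suc s)
    have "card (I_set (Suc s) b (a # x)) =
        card (Cons a ` I_set (Suc s) b x) +
        card (Cons (\<not> a) ` pad_front (b - 1) (I_set s b (a # x)))"
      unfolding I_set_Suc_Cons[OF assms]
      by (rule card_Un_disjoint) (auto simp: finite_I_set finite_card_pad_front)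
    also have "\<dots> = ins_ball_size b (length x) (Suc s) +
        2 ^ (b - 1) * ins_ball_size b (Suc (length x)) s"
      using Cons.IH Suc.IH
      by (simp add: card_image finite_card_pad_front finite_I_set)
    finally show ?case by (simp add: ins_ball_size_Suc_Suc)
  qed
qed

lemma card_I_set_Int_Cons_Cons_same:
  assumes "b \<ge> 1"
  shows "card (I_set (Suc s) b (a # x) \<inter> I_set (Suc s) b (a # y)) =
     card (I_set (Suc s) b x \<inter> I_set (Suc s) b y) +
     2 ^ (b - 1) * card (I_set s b (a # x) \<inter> I_set s b (a # y))"
proof -
  have split: "I_set (Suc s) b (a # x) \<inter> I_set (Suc s) b (a # y) =
      Cons a ` (I_set (Suc s) b x \<inter> I_set (Suc s) b y) \<union>
      Cons (\<not> a) ` pad_front (b - 1) (I_set s b (a # x) \<inter> I_set s b (a # y))"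
    unfolding I_set_Suc_Cons[OF assms] pad_front_Int by auto
  show ?thesis unfolding split
    by (subst card_Un_disjoint) (auto simp: card_image finite_I_set finite_card_pad_front)
qed

lemma pad_front_I_set_Cons_subset:
  assumes "b \<ge> 1"
  shows "pad_front (b - 1) (I_set s b (c # w)) \<subseteq> I_set (Suc s) b w"
proof
  fix z
  assume "z \<in> pad_front (b - 1) (I_set s b (c # w))"
  then obtain h u where z: "z = h @ u" "length h = b - 1" and u: "gapped_supseq b s (c # w) u"
    by (auto simp: pad_front_def I_set_eq_gapped_supseq)
  from u obtain g u' k s' where g: "u = g @ c # u'" "length g = k * b" "s = k + s'"
    and u': "gapped_supseq b s' w u'" by (rule gapped_supseq_ConsE)
  have "length (h @ g @ [c]) = (k + 1) * b" using z g assms by simp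
  then have "gapped_supseq b ((k + 1) + s') w ((h @ g @ [c]) @ u')"
    by (rule gapped_supseq_prepend_blocks[OF u'])
  then show "z \<in> I_set (Suc s) b w" using z g by (simp add: I_set_eq_gapped_supseq)
qed

text \<open>For \<open>a \<noteq> c\<close>, a common supersequence of \<open>a # x\<close> and \<open>c # y\<close> that starts with a
matches a against \<open>a # x\<close>, so against \<open>c # y\<close> it must start with a burst; symmetrically
for c.\<close>

definition mismatch_supseqs :: "nat \<Rightarrow> nat \<Rightarrow> bool \<Rightarrow> bool list \<Rightarrow> bool \<Rightarrow> bool list \<Rightarrow> bool list set"
  where "mismatch_supseqs b s a x c y =
    Cons a ` pad_front (b - 1) (I_set s b (c # y)) \<union> Cons c ` pad_front (b - 1) (I_set s b (a # x))"

lemma I_set_Int_Cons_Cons_distinct_subset: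
  assumes "b \<ge> 1" and "a \<noteq> c"
  shows "I_set (Suc s) b (a # x) \<inter> I_set (Suc s) b (c # y) \<subseteq> mismatch_supseqs b s a x c y"
  using assms(2) unfolding I_set_Suc_Cons[OF assms(1)] mismatch_supseqs_def
  by (cases a; cases c) auto

lemma I_set_Int_Cons_Cons_distinct_same_tail:
  assumes "b \<ge> 1" and "a \<noteq> c"
  shows "I_set (Suc s) b (a # w) \<inter> I_set (Suc s) b (c # w) = mismatch_supseqs b s a w c w"
proof
  show "mismatch_supseqs b s a w c w \<subseteq> I_set (Suc s) b (a # w) \<inter> I_set (Suc s) b (c # w)"
    using pad_front_I_set_Cons_subset[OF assms(1)] assms(2)
    unfolding I_set_Suc_Cons[OF assms(1)] mismatch_supseqs_def by (cases a; cases c; blast)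
qed (rule I_set_Int_Cons_Cons_distinct_subset[OF assms])

lemma card_mismatch_supseqs:
  assumes "b \<ge> 1" and "a \<noteq> c" and "length x = length y"
  shows "card (mismatch_supseqs b s a x c y) = 2 ^ b * ins_ball_size b (Suc (length x)) s"
proof -
  have "(2::nat) ^ b = 2 ^ (b - 1) + 2 ^ (b - 1)"
    using assms(1) by (cases b) simp_all
  then show ?thesis using assms unfolding mismatch_supseqs_def
    by (subst card_Un_disjoint)
      (auto simp: card_image finite_I_set finite_card_pad_front card_I_set distrib_right)
qed

lemma card_I_set_Int_le:
  assumes "b \<ge> 1"
  shows "length x = length y \<Longrightarrow> x \<noteq> y \<Longrightarrow>
     card (I_set (Suc s) b x \<inter> I_set (Suc s) b y) \<le> 2 ^ b * ins_ball_size b (length x) s"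
proof (induction x arbitrary: y s)
  case Nil
  then show ?case by simp
next
  case (Cons a x)
  then obtain c y' where y: "y = c # y'" and len: "length x = length y'" by (cases y) auto
  show ?case
  proof (cases "a = c")
    case False
    have "card (I_set (Suc s) b (a # x) \<inter> I_set (Suc s) b (c # y')) \<le>
        card (mismatch_supseqs b s a x c y')"
      by (intro card_mono I_set_Int_Cons_Cons_distinct_subset[OF assms False])
        (simp add: mismatch_supseqs_def finite_I_set finite_card_pad_front)
    then show ?thesis using card_mismatch_supseqs[OF assms False len] y by simp
  next
    case True
    with Cons.prems y have "x \<noteq> y'" by simp
    show ?thesis
    proof (induction s)
      case 0
      with Cons.IH[OF len \<open>x \<noteq> y'\<close>, of 0] \<open>x \<noteq> y'\<close> show ?case
        using card_I_set_Int_Cons_Cons_same[OF assms, of 0 a x y'] y True by simp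
    next
      case (Suc s)
      have "card (I_set (Suc (Suc s)) b (a # x) \<inter> I_set (Suc (Suc s)) b (a # y')) =
          card (I_set (Suc (Suc s)) b x \<inter> I_set (Suc (Suc s)) b y') +
          2 ^ (b - 1) * card (I_set (Suc s) b (a # x) \<inter> I_set (Suc s) b (a # y'))"
        by (rule card_I_set_Int_Cons_Cons_same[OF assms])
      also have "\<dots> \<le> 2 ^ b * ins_ball_size b (length x) (Suc s) +
          2 ^ (b - 1) * (2 ^ b * ins_ball_size b (Suc (length x)) s)"
        using Cons.IH[OF len \<open>x \<noteq> y'\<close>] Suc.IH y True by (intro add_mono mult_le_mono2) simp_all
      also have "\<dots> = 2 ^ b * ins_ball_size b (length (a # x)) (Suc s)"
        by (simp add: ins_ball_size_Suc_Suc algebra_simps)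
      finally show ?case using y True by simp
    qed
  qed
qed

lemma card_I_set_Int_Cons_Cons_distinct:
  assumes "b \<ge> 1" and "a \<noteq> c"
  shows "card (I_set (Suc s) b (a # w) \<inter> I_set (Suc s) b (c # w)) =
     2 ^ b * ins_ball_size b (Suc (length w)) s"
  unfolding I_set_Int_Cons_Cons_distinct_same_tail[OF assms]
  by (rule card_mismatch_supseqs[OF assms refl])

lemma I2_eq_ins_ball_size:
  assumes "b \<ge> 1"
  shows "I2 b n t = ins_ball_size b n t"
proof -
  have "{card (I_set t b x) | x. length x = n} = {ins_ball_size b n t}"
    using card_I_set[OF assms] by (auto intro: exI[of _ "replicate n True"])
  then show ?thesis unfolding I2_def by simp
qed

lemma N2plus_eq_ins_ball_size:
  assumes "b \<ge> 1" and "n \<ge> 1"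
  shows "N2plus b n (Suc s) = 2 ^ b * ins_ball_size b n s"
proof -
  let ?M = "{card (I_set (Suc s) b x \<inter> I_set (Suc s) b y) | x y.
    length x = n \<and> length y = n \<and> x \<noteq> y}"
  have bound: "k \<le> 2 ^ b * ins_ball_size b n s" if "k \<in> ?M" for k
  proof -
    from that obtain x y where "k = card (I_set (Suc s) b x \<inter> I_set (Suc s) b y)"
      and "length x = n" "length y = n" "x \<noteq> y" by blast
    then show ?thesis using card_I_set_Int_le[OF assms(1), of x y s] by simp
  qed
  then have "finite ?M" by (meson finite_nat_set_iff_bounded_le)
  moreover obtain m where "n = Suc m" using assms(2) by (cases n) auto
  then have "2 ^ b * ins_ball_size b n s \<in> ?M"
    using card_I_set_Int_Cons_Cons_distinct[OF assms(1), of True False s "replicate m True"]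
    by (intro CollectI exI[of _ "True # replicate m True"] exI[of _ "False # replicate m True"])
      simp
  ultimately show ?thesis unfolding N2plus_def using bound by (intro Max_eqI) auto
qed

theorem mainTheorem4:
  fixes n t b :: nat
  assumes "n \<ge> 1" and "t \<ge> 1" and "b \<ge> 1"
  shows "N2plus b n t = 2 ^ b * I2 b n (t - 1)
       \<and> 2 ^ b * I2 b n (t - 1) = 2 ^ (t * (b - 1) + 1) * (\<Sum>i = 0..t - 1. (n + t - 1) choose i)"
proof -
  obtain s where t: "t = Suc s" using assms(2) by (cases t) auto
  have "N2plus b n t = 2 ^ b * I2 b n (t - 1)"
    using N2plus_eq_ins_ball_size I2_eq_ins_ball_size assms t by simp
  moreover have "2 ^ b * ins_ball_size b n s =
      2 ^ (t * (b - 1) + 1) * (\<Sum>i = 0..t - 1. (n + t - 1) choose i)"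
  proof -
    have "b + s * (b - 1) = t * (b - 1) + 1" using t assms(3) by (cases b) simp_all
    moreover have "{0..t - 1} = {..s}" using t by auto
    ultimately show ?thesis using t by (simp add: ins_ball_size_def power_add)
  qed
  ultimately show ?thesis using I2_eq_ins_ball_size assms t by simp
qed

end
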